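(* Let $G$ be a group and $\preceq$ a left-ordering on $G$. Then $\preceq$ is Conradian if and only if the action of $G$ on the totally ordered set $(G,\preceq)$ by left translations admits no crossing.
   Context: A left-ordering on a group $G$ is a total order $\preceq$ with $f\prec g\Rightarrow hf\prec hg$ for all $f,g,h\in G$. It is Conradian if for all $f\succ id$ and $g\succ id$ there is $n\in\mathbb{N}$ with $fg^n\succ g$. If $G$ acts by order-preserving bijections on a totally ordered set $(\Omega,\le)$, a crossing for the action is a 5-tuple $(f,g,u,v,w)$ with $f,g\in G$ and $u,v,w\in\Omega$ such that: (i) $u<w<v$; (ii) for every $n\in\mathbb{N}$, $g^n u<v$ and $f^n v>u$; (iii) there exist $M,N\in\mathbb{N}$ with $f^N v<w<g^M u$. The left translation action is $g\cdot h=gh$. *)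

theory Defs
  imports "HOL-Algebra.Group"
begin

definition left_ordering :: "('a, 'b) monoid_scheme \<Rightarrow> ('a \<Rightarrow> 'a \<Rightarrow> bool) \<Rightarrow> bool" where
  "left_ordering G r \<longleftrightarrow>
     (\<forall>x\<in>carrier G. r x x) \<and>
     (\<forall>x\<in>carrier G. \<forall>y\<in>carrier G. r x y \<and> r y x \<longrightarrow> x = y) \<and>
     (\<forall>x\<in>carrier G. \<forall>y\<in>carrier G. \<forall>z\<in>carrier G. r x y \<and> r y z \<longrightarrow> r x z) \<and>
     (\<forall>x\<in>carrier G. \<forall>y\<in>carrier G. r x y \<or> r y x) \<and>
     (\<forall>f\<in>carrier G. \<forall>g\<in>carrier G. \<forall>h\<in>carrier G.
        r f g \<and> f \<noteq> g \<longrightarrow> r (h \<otimes>\<^bsub>G\<^esub> f) (h \<otimes>\<^bsub>G\<^esub> g) \<and> h \<otimes>\<^bsub>G\<^esub> f \<noteq> h \<otimes>\<^bsub>G\<^esub> g)"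

definition strict :: "('a \<Rightarrow> 'a \<Rightarrow> bool) \<Rightarrow> 'a \<Rightarrow> 'a \<Rightarrow> bool" where
  "strict r x y \<longleftrightarrow> r x y \<and> x \<noteq> y"

definition conradian :: "('a, 'b) monoid_scheme \<Rightarrow> ('a \<Rightarrow> 'a \<Rightarrow> bool) \<Rightarrow> bool" where
  "conradian G r \<longleftrightarrow>
     (\<forall>f\<in>carrier G. \<forall>g\<in>carrier G.
        strict r \<one>\<^bsub>G\<^esub> f \<and> strict r \<one>\<^bsub>G\<^esub> g \<longrightarrow>
        (\<exists>n::nat. n \<ge> 1 \<and> strict r g (f \<otimes>\<^bsub>G\<^esub> (g [^]\<^bsub>G\<^esub> n))))"

definition crossing ::
  "('a, 'b) monoid_scheme \<Rightarrow> 'c set \<Rightarrow> ('c \<Rightarrow> 'c \<Rightarrow> bool) \<Rightarrow> ('a \<Rightarrow> 'c \<Rightarrow> 'c)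
     \<Rightarrow> 'a \<Rightarrow> 'a \<Rightarrow> 'c \<Rightarrow> 'c \<Rightarrow> 'c \<Rightarrow> bool" where
  "crossing G Omega lt act f g u v w \<longleftrightarrow>
     f \<in> carrier G \<and> g \<in> carrier G \<and> u \<in> Omega \<and> v \<in> Omega \<and> w \<in> Omega \<and>
     lt u w \<and> lt w v \<and>
     (\<forall>n::nat. lt (act (g [^]\<^bsub>G\<^esub> n) u) v \<and> lt u (act (f [^]\<^bsub>G\<^esub> n) v)) \<and>
     (\<exists>(M::nat) (N::nat). lt (act (f [^]\<^bsub>G\<^esub> N) v) w \<and> lt w (act (g [^]\<^bsub>G\<^esub> M) u))"

definition admits_crossing ::
  "('a, 'b) monoid_scheme \<Rightarrow> 'c set \<Rightarrow> ('c \<Rightarrow> 'c \<Rightarrow> bool) \<Rightarrow> ('a \<Rightarrow> 'c \<Rightarrow> 'c) \<Rightarrow> bool" where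
  "admits_crossing G Omega lt act \<longleftrightarrow>
     (\<exists>f g u v w. crossing G Omega lt act f g u v w)"

end

theory Submission
  imports Defs
begin

text \<open>
  If f, g > 1 violate the Conradian condition, i.e. f g^n \<preceq> g for all n \<ge> 1, then the points
  f < f g^2 < g form a crossing for f and its conjugate f g f^-1: the orbit of f under the
  conjugate is f g^n, which climbs towards g without reaching it, while the f-orbit f^n g of g
  stays above f.
  Conversely, given a crossing (f, g, u, v, w) put F = f^N and H = g^M. Then the conjugates
  u^-1 H u and u^-1 F H u are positive, and the Conradian condition for them, read back through
  left translation by u, says H u \<prec> F H^(n+1) u; but H^(n+1) u \<prec> v and F v \<prec> w \<prec> H u.
\<close>

locale left_ordered_group = group G for G (structure) + fixes r :: "'a \<Rightarrow> 'a \<Rightarrow> bool"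
  assumes left_ordering: "left_ordering G r"
begin

abbreviation less_eq_lo (infix "\<preceq>" 50) where "x \<preceq> y \<equiv> r x y"
abbreviation less_lo (infix "\<prec>" 50) where "x \<prec> y \<equiv> strict r x y"

lemma le_refl: "x \<in> carrier G \<Longrightarrow> x \<preceq> x"
  using left_ordering unfolding left_ordering_def by blast

lemma le_antisym: "\<lbrakk>x \<in> carrier G; y \<in> carrier G; x \<preceq> y; y \<preceq> x\<rbrakk> \<Longrightarrow> x = y"
  using left_ordering unfolding left_ordering_def by blast

lemma le_trans: "\<lbrakk>x \<in> carrier G; y \<in> carrier G; z \<in> carrier G; x \<preceq> y; y \<preceq> z\<rbrakk> \<Longrightarrow> x \<preceq> z"
  using left_ordering unfolding left_ordering_def by blast

lemma le_total: "\<lbrakk>x \<in> carrier G; y \<in> carrier G\<rbrakk> \<Longrightarrow> x \<preceq> y \<or> y \<preceq> x"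
  using left_ordering unfolding left_ordering_def by blast

lemma less_le_trans: "\<lbrakk>x \<in> carrier G; y \<in> carrier G; z \<in> carrier G; x \<prec> y; y \<preceq> z\<rbrakk> \<Longrightarrow> x \<prec> z"
  unfolding strict_def using le_trans le_antisym by metis

lemma le_less_trans: "\<lbrakk>x \<in> carrier G; y \<in> carrier G; z \<in> carrier G; x \<preceq> y; y \<prec> z\<rbrakk> \<Longrightarrow> x \<prec> z"
  unfolding strict_def using le_trans le_antisym by metis

lemma less_trans: "\<lbrakk>x \<in> carrier G; y \<in> carrier G; z \<in> carrier G; x \<prec> y; y \<prec> z\<rbrakk> \<Longrightarrow> x \<prec> z"
  using less_le_trans strict_def by metis

lemma less_asym: "\<lbrakk>x \<in> carrier G; y \<in> carrier G; x \<prec> y\<rbrakk> \<Longrightarrow> \<not> y \<prec> x"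
  unfolding strict_def using le_antisym by metis

lemma not_less: "\<lbrakk>x \<in> carrier G; y \<in> carrier G; \<not> x \<prec> y\<rbrakk> \<Longrightarrow> y \<preceq> x"
  unfolding strict_def using le_total le_refl by metis

lemma mult_left_strict_mono:
  "\<lbrakk>x \<in> carrier G; y \<in> carrier G; h \<in> carrier G; x \<prec> y\<rbrakk> \<Longrightarrow> h \<otimes> x \<prec> h \<otimes> y"
  using left_ordering unfolding left_ordering_def strict_def by blast

lemma inv_mult_cancel_left [simp]: "\<lbrakk>h \<in> carrier G; x \<in> carrier G\<rbrakk> \<Longrightarrow> inv h \<otimes> (h \<otimes> x) = x"
  by (simp add: m_assoc[symmetric])

lemma mult_inv_cancel_left [simp]: "\<lbrakk>h \<in> carrier G; x \<in> carrier G\<rbrakk> \<Longrightarrow> h \<otimes> (inv h \<otimes> x) = x"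
  by (simp add: m_assoc[symmetric])

lemma mult_left_less_iff:
  assumes "x \<in> carrier G" "y \<in> carrier G" "h \<in> carrier G"
  shows "h \<otimes> x \<prec> h \<otimes> y \<longleftrightarrow> x \<prec> y"
proof
  assume "h \<otimes> x \<prec> h \<otimes> y"
  then show "x \<prec> y"
    using assms mult_left_strict_mono[of "h \<otimes> x" "h \<otimes> y" "inv h"] by simp
next
  show "x \<prec> y \<Longrightarrow> h \<otimes> x \<prec> h \<otimes> y"
    using assms by (rule mult_left_strict_mono)
qed

lemma one_less_mult:
  assumes "x \<in> carrier G" "y \<in> carrier G" "\<one> \<preceq> x" "\<one> \<prec> y"
  shows "\<one> \<prec> x \<otimes> y"
proof -
  have "x \<otimes> \<one> \<prec> x \<otimes> y"
    by (rule mult_left_strict_mono) (use assms in auto)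
  then show ?thesis
    using assms le_less_trans[of \<one> x "x \<otimes> y"] by simp
qed

lemma mult_pow_less_mult_pow_Suc:
  assumes "x \<in> carrier G" "g \<in> carrier G" "\<one> \<prec> g"
  shows "x \<otimes> g [^] n \<prec> x \<otimes> g [^] Suc n"
  using mult_left_strict_mono[of \<one> g "x \<otimes> g [^] n"] assms by (simp add: m_assoc)

lemma one_le_pow:
  assumes "g \<in> carrier G" "\<one> \<prec> g"
  shows "\<one> \<preceq> g [^] (n::nat)"
proof (induction n)
  case 0
  then show ?case by (simp add: le_refl)
next
  case (Suc n)
  have "g [^] n \<prec> g [^] Suc n"
    using mult_pow_less_mult_pow_Suc[of \<one> g n] assms by simp
  then have "\<one> \<prec> g [^] Suc n"
    using Suc.IH assms le_less_trans by (meson nat_pow_closed one_closed)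
  then show ?case
    by (simp add: strict_def)
qed

lemma pow_conj: "\<lbrakk>x \<in> carrier G; g \<in> carrier G\<rbrakk> \<Longrightarrow> (x \<otimes> g \<otimes> inv x) [^] (n::nat) = x \<otimes> g [^] n \<otimes> inv x"
  by (induction n) (simp_all add: m_assoc)

lemma one_less_conj:
  assumes "u \<in> carrier G" "x \<in> carrier G" "u \<prec> x \<otimes> u"
  shows "\<one> \<prec> inv u \<otimes> x \<otimes> u"
  using mult_left_less_iff[of u "x \<otimes> u" "inv u"] assms by (simp add: m_assoc)

lemma not_conradian_if_crossing_data:
  assumes carrier: "F \<in> carrier G" "H \<in> carrier G" "u \<in> carrier G" "v \<in> carrier G"
    and "u \<prec> H \<otimes> u" "u \<prec> F \<otimes> (F \<otimes> v)" and Fv_below: "F \<otimes> v \<prec> H \<otimes> u"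
    and orbit_below: "\<And>n. H [^] (n::nat) \<otimes> u \<prec> v"
  shows "\<not> conradian G r"
proof
  assume conradian: "conradian G r"
  define g where "g = inv u \<otimes> H \<otimes> u"
  define f where "f = inv u \<otimes> (F \<otimes> H) \<otimes> u"
  have fg_carrier: "f \<in> carrier G" "g \<in> carrier G"
    using carrier by (simp_all add: f_def g_def)
  have "F \<otimes> (F \<otimes> v) \<prec> F \<otimes> (H \<otimes> u)"
    by (rule mult_left_strict_mono) (use Fv_below carrier in auto)
  then have "u \<prec> (F \<otimes> H) \<otimes> u"
    using \<open>u \<prec> F \<otimes> (F \<otimes> v)\<close> carrier less_trans[of u "F \<otimes> (F \<otimes> v)" "F \<otimes> (H \<otimes> u)"]
    by (simp add: m_assoc)
  then have "\<one> \<prec> f" "\<one> \<prec> g"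
    using assms by (simp_all add: f_def g_def one_less_conj)
  then obtain n :: nat where "g \<prec> f \<otimes> g [^] n"
    using conradian fg_carrier unfolding conradian_def by blast
  moreover have "g = inv u \<otimes> (H \<otimes> u)"
    using carrier by (simp add: g_def m_assoc)
  moreover have "f \<otimes> g [^] n = inv u \<otimes> (F \<otimes> (H [^] Suc n \<otimes> u))"
    by (subst nat_pow_Suc2)
      (use pow_conj[of "inv u" H n] carrier in \<open>simp_all add: f_def g_def m_assoc\<close>)
  ultimately have above: "H \<otimes> u \<prec> F \<otimes> (H [^] Suc n \<otimes> u)"
    using carrier mult_left_less_iff by simp
  have "F \<otimes> (H [^] Suc n \<otimes> u) \<prec> F \<otimes> v"
    by (rule mult_left_strict_mono) (use orbit_below[of "Suc n"] carrier in auto)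
  then have "F \<otimes> (H [^] Suc n \<otimes> u) \<prec> H \<otimes> u"
    using Fv_below carrier less_trans[of _ "F \<otimes> v" "H \<otimes> u"] by simp
  then show False
    using above carrier less_asym[of "H \<otimes> u" "F \<otimes> (H [^] Suc n \<otimes> u)"] by simp
qed

lemma not_conradian_if_crossing:
  assumes "admits_crossing G (carrier G) (\<prec>) (\<otimes>)"
  shows "\<not> conradian G r"
proof -
  obtain f g u v w where "crossing G (carrier G) (\<prec>) (\<otimes>) f g u v w"
    using assms unfolding admits_crossing_def by blast
  then obtain M N :: nat where carrier:
    "f \<in> carrier G" "g \<in> carrier G" "u \<in> carrier G" "v \<in> carrier G" "w \<in> carrier G"
    and "u \<prec> w" and orbit_g: "\<And>n::nat. g [^] n \<otimes> u \<prec> v"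
    and orbit_f: "\<And>n::nat. u \<prec> f [^] n \<otimes> v"
    and "f [^] N \<otimes> v \<prec> w" "w \<prec> g [^] M \<otimes> u"
    unfolding crossing_def by (elim conjE exE) simp
  show ?thesis
  proof (rule not_conradian_if_crossing_data[of "f [^] N" "g [^] M" u v])
    show "u \<prec> g [^] M \<otimes> u" "f [^] N \<otimes> v \<prec> g [^] M \<otimes> u"
      using less_trans[OF _ _ _ \<open>u \<prec> w\<close> \<open>w \<prec> g [^] M \<otimes> u\<close>]
        less_trans[OF _ _ _ \<open>f [^] N \<otimes> v \<prec> w\<close> \<open>w \<prec> g [^] M \<otimes> u\<close>] carrier
      by simp_all
    show "u \<prec> f [^] N \<otimes> (f [^] N \<otimes> v)"
      using orbit_f[of "N + N"] carrier by (simp add: m_assoc[symmetric] nat_pow_mult)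
    show "(g [^] M) [^] n \<otimes> u \<prec> v" for n :: nat
      using orbit_g[of "M * n"] carrier by (simp add: nat_pow_pow)
  qed (use carrier in auto)
qed

lemma crossing_if_not_conradian_pair:
  assumes carrier: "f \<in> carrier G" "g \<in> carrier G" and "\<one> \<prec> f" "\<one> \<prec> g"
    and below_g: "\<And>n::nat. n \<ge> 1 \<Longrightarrow> f \<otimes> g [^] n \<preceq> g"
  shows "crossing G (carrier G) (\<prec>) (\<otimes>) f (f \<otimes> g \<otimes> inv f) f g (f \<otimes> g [^] (2::nat))"
proof -
  have step: "f \<otimes> g [^] n \<prec> f \<otimes> g [^] Suc n" for n :: nat
    using carrier \<open>\<one> \<prec> g\<close> by (rule mult_pow_less_mult_pow_Suc)
  have orbit_below: "f \<otimes> g [^] n \<prec> g" for n :: nat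
    using less_le_trans[OF _ _ _ step below_g[of "Suc n"]] carrier by simp
  have orbit: "(f \<otimes> g \<otimes> inv f) [^] n \<otimes> f = f \<otimes> g [^] n" for n :: nat
    using pow_conj[of f g n] carrier by (simp add: m_assoc)
  have above_f: "f \<prec> f [^] n \<otimes> g" for n :: nat
  proof (cases n)
    case 0
    then show ?thesis
      using orbit_below[of 0] carrier by simp
  next
    case (Suc m)
    have "\<one> \<prec> f [^] m \<otimes> g"
      using one_less_mult[OF _ _ one_le_pow[OF carrier(1) \<open>\<one> \<prec> f\<close>] \<open>\<one> \<prec> g\<close>] carrier by simp
    have "f \<otimes> \<one> \<prec> f \<otimes> (f [^] m \<otimes> g)"
      by (rule mult_left_strict_mono) (use \<open>\<one> \<prec> f [^] m \<otimes> g\<close> carrier in auto)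
    then show ?thesis
      unfolding Suc by (subst nat_pow_Suc2) (use carrier in \<open>simp_all add: m_assoc\<close>)
  qed
  have "f \<prec> f \<otimes> g [^] (2::nat)"
    using less_trans[OF _ _ _ step[of 0] step[of "Suc 0"]] carrier by (simp add: numeral_2_eq_2)
  moreover have "\<exists>(M::nat) (N::nat). f [^] N \<otimes> g \<prec> f \<otimes> g [^] (2::nat)
      \<and> f \<otimes> g [^] (2::nat) \<prec> (f \<otimes> g \<otimes> inv f) [^] M \<otimes> f"
  proof (intro exI conjI)
    show "f [^] (1::nat) \<otimes> g \<prec> f \<otimes> g [^] (2::nat)"
      using step[of 1] carrier by (simp add: numeral_2_eq_2)
    show "f \<otimes> g [^] (2::nat) \<prec> (f \<otimes> g \<otimes> inv f) [^] (3::nat) \<otimes> f"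
      using step[of 2] orbit[of 3] by (simp add: numeral_2_eq_2 numeral_3_eq_3)
  qed
  ultimately show ?thesis
    unfolding crossing_def using carrier orbit orbit_below above_f by auto
qed

lemma crossing_if_not_conradian:
  assumes "\<not> conradian G r"
  shows "admits_crossing G (carrier G) (\<prec>) (\<otimes>)"
proof -
  obtain f g where carrier: "f \<in> carrier G" "g \<in> carrier G" and "\<one> \<prec> f" "\<one> \<prec> g"
    and "\<And>n::nat. n \<ge> 1 \<Longrightarrow> \<not> g \<prec> f \<otimes> g [^] n"
    using assms unfolding conradian_def by blast
  then have "crossing G (carrier G) (\<prec>) (\<otimes>) f (f \<otimes> g \<otimes> inv f) f g (f \<otimes> g [^] (2::nat))"
    using not_less by (intro crossing_if_not_conradian_pair) auto
  then show ?thesis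
    unfolding admits_crossing_def by blast
qed

end

theorem theoremA:
  fixes G (structure) and r :: "'a \<Rightarrow> 'a \<Rightarrow> bool"
  assumes "group G" and "left_ordering G r"
  shows "conradian G r \<longleftrightarrow>
           \<not> admits_crossing G (carrier G) (strict r) (\<lambda>g h. g \<otimes>\<^bsub>G\<^esub> h)"
proof -
  interpret left_ordered_group G r
    using assms by (simp add: left_ordered_group_def left_ordered_group_axioms_def)
  show ?thesis
    using not_conradian_if_crossing crossing_if_not_conradian by blast
qed

end
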